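(* Let $m\ge 4$ and $n\ge 5$ be integers with $n$ even. On an $m\times n$ board with White king on $(m,1)$, White rook on $(1,1)$, Black king on $(m,n)$, and White to move, White can force checkmate within $n+1$ moves.
   Context: The board is the set of squares $(x,y)$ with $1\le x\le m$ (column) and $1\le y\le n$ (row). The pieces move and capture as in ordinary chess, restricted to this rectangular board: a king moves to any of the up to eight adjacent squares, and a rook moves any number of squares along its row or column without passing through another piece. The usual legality rules apply: a king may not move to a square attacked by an enemy piece, and the kings may never be adjacent. Black is checkmated if the Black king is attacked and Black has no legal move. "White can force checkmate within $k$ moves" means White has a strategy such that, against every sequence of legal Black replies, Black is checkmated by one of White's first $k$ moves; the players alternate, White first. *)

theory Defs
  imports Main
begin

type_synonym sq = "int \<times> int"

text \<open>Square (x,y): x = column, y = row; the board is 1..m by 1..n.\<close>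
definition on_board :: "nat \<Rightarrow> nat \<Rightarrow> sq \<Rightarrow> bool" where
  "on_board m n s \<longleftrightarrow> 1 \<le> fst s \<and> fst s \<le> int m \<and> 1 \<le> snd s \<and> snd s \<le> int n"

definition king_adj :: "sq \<Rightarrow> sq \<Rightarrow> bool" where
  "king_adj p q \<longleftrightarrow> p \<noteq> q \<and> \<bar>fst p - fst q\<bar> \<le> 1 \<and> \<bar>snd p - snd q\<bar> \<le> 1"

definition strictly_between :: "sq \<Rightarrow> sq \<Rightarrow> sq \<Rightarrow> bool" where
  "strictly_between p q t \<longleftrightarrow>
     (fst p = fst q \<and> fst t = fst p \<and> min (snd p) (snd q) < snd t \<and> snd t < max (snd p) (snd q)) \<or>
     (snd p = snd q \<and> snd t = snd p \<and> min (fst p) (fst q) < fst t \<and> fst t < max (fst p) (fst q))"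

definition rook_attacks :: "sq set \<Rightarrow> sq \<Rightarrow> sq \<Rightarrow> bool" where
  "rook_attacks B r s \<longleftrightarrow> r \<noteq> s \<and> (fst r = fst s \<or> snd r = snd s) \<and> (\<forall>t\<in>B. \<not> strictly_between r s t)"

text \<open>Position: White king, White rook (None once captured), Black king.\<close>
record pos =
  wk :: sq
  wr :: "sq option"
  bk :: sq

definition white_moves :: "nat \<Rightarrow> nat \<Rightarrow> pos \<Rightarrow> pos set" where
  "white_moves m n P =
     {P\<lparr>wk := k\<rparr> | k. on_board m n k \<and> king_adj (wk P) k \<and> wr P \<noteq> Some k \<and> k \<noteq> bk P
                       \<and> \<not> king_adj k (bk P)}
   \<union> {P\<lparr>wr := Some r'\<rparr> | r r'. wr P = Some r \<and> on_board m n r' \<and> rook_attacks {wk P, bk P} r r'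
                       \<and> r' \<noteq> wk P \<and> r' \<noteq> bk P \<and> \<not> king_adj (wk P) (bk P)}"

definition black_in_check :: "pos \<Rightarrow> bool" where
  "black_in_check P = (case wr P of None \<Rightarrow> False | Some r \<Rightarrow> rook_attacks {wk P} r (bk P))"

definition black_moves :: "nat \<Rightarrow> nat \<Rightarrow> pos \<Rightarrow> pos set" where
  "black_moves m n P =
     {P\<lparr>bk := k, wr := (if wr P = Some k then None else wr P)\<rparr> | k.
        on_board m n k \<and> king_adj (bk P) k \<and> k \<noteq> wk P \<and> \<not> king_adj (wk P) k \<and>
        (case wr P of None \<Rightarrow> True | Some r \<Rightarrow> r = k \<or> \<not> rook_attacks {wk P} r k)}"

definition checkmated :: "nat \<Rightarrow> nat \<Rightarrow> pos \<Rightarrow> bool" where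
  "checkmated m n P \<longleftrightarrow> black_in_check P \<and> black_moves m n P = {}"

fun forced_mate :: "nat \<Rightarrow> nat \<Rightarrow> nat \<Rightarrow> pos \<Rightarrow> bool" where
  "forced_mate m n 0 P = False"
| "forced_mate m n (Suc k) P =
     (\<exists>P'\<in>white_moves m n P. checkmated m n P' \<or>
        (black_moves m n P' \<noteq> {} \<and> (\<forall>P''\<in>black_moves m n P'. forced_mate m n k P'')))"

end

theory Submission
  imports Defs
begin

(* The rook moves to column m-1 and confines the Black king to column m, where it can
   only step up or down, while the White king climbs the same column towards it. White
   takes the opposition: the gap between the kings is even after the opening move, so
   White spends one waiting rook move along column m-1 when the gap is 2; with an odd
   gap every climb leaves it odd, so Black is eventually pushed to the corner (m,n) with
   the White king three rows below, where a three-move mating net finishes. The opening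
   move, the n-4 climbs, the waiting move and the mating net add up to n+1 moves. *)

lemmas board_defs = on_board_def king_adj_def strictly_between_def rook_attacks_def

lemma king_adj_cases:
  assumes "king_adj (p, q) (a, c)"
  shows "(a = p - 1 \<or> a = p \<or> a = p + 1) \<and> (c = q - 1 \<or> c = q \<or> c = q + 1)"
  using assms unfolding king_adj_def by auto

lemma white_king_move:
  assumes "on_board m n k" "king_adj (wk P) k" "wr P \<noteq> Some k" "k \<noteq> bk P" "\<not> king_adj k (bk P)"
  shows "P\<lparr>wk := k\<rparr> \<in> white_moves m n P"
  using assms unfolding white_moves_def by blast

lemma white_rook_move:
  assumes "wr P = Some r" "on_board m n r'" "rook_attacks {wk P, bk P} r r'"
    "r' \<noteq> wk P" "r' \<noteq> bk P" "\<not> king_adj (wk P) (bk P)"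
  shows "P\<lparr>wr := Some r'\<rparr> \<in> white_moves m n P"
  using assms unfolding white_moves_def by blast

definition black_flights :: "nat \<Rightarrow> nat \<Rightarrow> pos \<Rightarrow> sq set" where
  "black_flights m n P =
     {k. on_board m n k \<and> king_adj (bk P) k \<and> k \<noteq> wk P \<and> \<not> king_adj (wk P) k \<and>
         (case wr P of None \<Rightarrow> True | Some r \<Rightarrow> r = k \<or> \<not> rook_attacks {wk P} r k)}"

lemma black_moves_eq_image:
  "black_moves m n P =
     (\<lambda>k. P\<lparr>bk := k, wr := (if wr P = Some k then None else wr P)\<rparr>) ` black_flights m n P"
  unfolding black_moves_def black_flights_def by blast

lemma black_moves_rook_out_of_reach:
  assumes "wr P = Some r" "\<not> king_adj (bk P) r"
  shows "black_moves m n P = (\<lambda>k. P\<lparr>bk := k\<rparr>) ` black_flights m n P"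
proof -
  have "wr P \<noteq> Some k" if "k \<in> black_flights m n P" for k
    using that assms unfolding black_flights_def by auto
  then show ?thesis unfolding black_moves_eq_image by (auto intro!: image_cong)
qed

lemma forced_mate_SucI:
  assumes "P' \<in> white_moves m n P" "wr P' = Some r" "\<not> king_adj (bk P') r"
    "black_flights m n P' \<noteq> {}"
    "\<And>k. k \<in> black_flights m n P' \<Longrightarrow> forced_mate m n j (P'\<lparr>bk := k\<rparr>)"
  shows "forced_mate m n (Suc j) P"
proof -
  have "black_moves m n P' = (\<lambda>k. P'\<lparr>bk := k\<rparr>) ` black_flights m n P'"
    using assms(2,3) by (rule black_moves_rook_out_of_reach)
  then show ?thesis using assms(1,4,5) by (auto intro!: bexI[of _ P'])
qed

lemma forced_mate_Suc_checkmateI: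
  assumes "P' \<in> white_moves m n P" "black_in_check P'" "black_flights m n P' = {}"
  shows "forced_mate m n (Suc j) P"
proof -
  have "checkmated m n P'" using assms(2,3) unfolding checkmated_def black_moves_eq_image by simp
  then show ?thesis using assms(1) by auto
qed

definition corridor :: "nat \<Rightarrow> int \<Rightarrow> int \<Rightarrow> int \<Rightarrow> pos" where
  "corridor m y b r = \<lparr>wk = (int m, y), wr = Some (int m - 1, r), bk = (int m, b)\<rparr>"

lemma black_flights_corridor:
  assumes "1 \<le> m" "1 \<le> y" "y + 2 \<le> b" "r + 2 \<le> b"
  shows "black_flights m n (corridor m y b r) =
           {(int m, c) | c. \<bar>c - b\<bar> = 1 \<and> y + 2 \<le> c \<and> c \<le> int n}"
proof (intro set_eqI iffI)
  fix k assume "k \<in> black_flights m n (corridor m y b r)"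
  then obtain a c where k: "k = (a, c)" and
    h: "on_board m n (a, c)" "king_adj (int m, b) (a, c)" "\<not> king_adj (int m, y) (a, c)"
       "(a, c) = (int m - 1, r) \<or> \<not> rook_attacks {(int m, y)} (int m - 1, r) (a, c)"
    unfolding black_flights_def corridor_def by (cases k) auto
  have "a = int m"
    using king_adj_cases[OF h(2)] h(1,4) assms(4) by (auto simp: board_defs)
  then show "k \<in> {(int m, c) | c. \<bar>c - b\<bar> = 1 \<and> y + 2 \<le> c \<and> c \<le> int n}"
    using king_adj_cases[OF h(2)] h(1-3) k assms(3) by (auto simp: board_defs)
next
  fix k assume "k \<in> {(int m, c) | c. \<bar>c - b\<bar> = 1 \<and> y + 2 \<le> c \<and> c \<le> int n}"
  then show "k \<in> black_flights m n (corridor m y b r)"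
    using assms by (auto simp: black_flights_def corridor_def board_defs)
qed

lemma forced_mate_Suc_corridorI:
  assumes "corridor m y b r \<in> white_moves m n P"
    "1 \<le> m" "1 \<le> y" "y + 2 \<le> b" "r + 2 \<le> b" "b \<le> int n" "b < int n \<or> y + 3 \<le> b"
    "\<And>c. \<bar>c - b\<bar> = 1 \<Longrightarrow> y + 2 \<le> c \<Longrightarrow> c \<le> int n \<Longrightarrow> forced_mate m n j (corridor m y c r)"
  shows "forced_mate m n (Suc j) P"
proof (rule forced_mate_SucI[OF assms(1)])
  show "wr (corridor m y b r) = Some (int m - 1, r)" by (simp add: corridor_def)
  show "\<not> king_adj (bk (corridor m y b r)) (int m - 1, r)"
    using assms(5) by (simp add: corridor_def king_adj_def)
  show "black_flights m n (corridor m y b r) \<noteq> {}"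
  proof -
    have "(int m, b + 1) \<in> black_flights m n (corridor m y b r) \<or>
          (int m, b - 1) \<in> black_flights m n (corridor m y b r)"
      using assms(3-7) unfolding black_flights_corridor[OF assms(2-5)] by auto
    then show ?thesis by blast
  qed
  fix k assume "k \<in> black_flights m n (corridor m y b r)"
  then obtain c where "k = (int m, c)" "\<bar>c - b\<bar> = 1" "y + 2 \<le> c" "c \<le> int n"
    unfolding black_flights_corridor[OF assms(2-5)] by blast
  then show "forced_mate m n j ((corridor m y b r)\<lparr>bk := k\<rparr>)"
    using assms(8) by (simp add: corridor_def)
qed

lemma white_moves_corridor_king_step:
  assumes "1 \<le> m" "1 \<le> y" "y + 3 \<le> b" "b \<le> int n"
  shows "corridor m (y + 1) b r \<in> white_moves m n (corridor m y b r)"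
proof -
  have "corridor m (y + 1) b r = (corridor m y b r)\<lparr>wk := (int m, y + 1)\<rparr>"
    by (simp add: corridor_def)
  also have "\<dots> \<in> white_moves m n (corridor m y b r)"
    using assms by (intro white_king_move) (auto simp: corridor_def board_defs)
  finally show ?thesis .
qed

lemma white_moves_corridor_rook_shift:
  assumes "2 \<le> m" "1 \<le> r'" "r' \<le> int n" "r \<noteq> r'" "y + 2 \<le> b"
  shows "corridor m y b r' \<in> white_moves m n (corridor m y b r)"
proof -
  have "corridor m y b r' = (corridor m y b r)\<lparr>wr := Some (int m - 1, r')\<rparr>"
    by (simp add: corridor_def)
  also have "\<dots> \<in> white_moves m n (corridor m y b r)"
    using assms by (intro white_rook_move) (auto simp: corridor_def board_defs)
  finally show ?thesis .
qed

lemma black_flights_top_edge: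
  assumes "(a, c) \<in> black_flights m n P" "bk P = (p, int n)"
  shows "(a = p - 1 \<or> a = p \<or> a = p + 1) \<and> a \<le> int m \<and> (c = int n - 1 \<or> c = int n)"
  using assms king_adj_cases[of p "int n" a c] unfolding black_flights_def on_board_def by auto

lemma forced_mate_Suc_back_rank:
  assumes "3 \<le> m" "1 \<le> r" "r \<le> int n - 3"
  shows "forced_mate m n (Suc j)
           \<lparr>wk = (int m - 1, int n - 2), wr = Some (int m - 2, r), bk = (int m, int n)\<rparr>"
    (is "forced_mate m n (Suc j) ?P")
proof (rule forced_mate_Suc_checkmateI)
  let ?W = "?P\<lparr>wr := Some (int m - 2, int n)\<rparr>"
  show "?W \<in> white_moves m n ?P"
    using assms by (intro white_rook_move) (auto simp: board_defs)
  show "black_in_check ?W"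
    using assms by (auto simp: black_in_check_def board_defs)
  show "black_flights m n ?W = {}"
  proof (intro equals0I)
    fix k assume k: "k \<in> black_flights m n ?W"
    obtain a c where ac: "k = (a, c)" by fastforce
    have "(a = int m - 1 \<or> a = int m) \<and> (c = int n - 1 \<or> c = int n)"
      using black_flights_top_edge[of a c m n ?W "int m"] k ac by auto
    then show False
      using assms k ac by (elim conjE disjE) (auto simp: black_flights_def board_defs)
  qed
qed

lemma forced_mate_Suc_Suc_rook_swing:
  assumes "3 \<le> m" "1 \<le> r" "r \<le> int n - 3"
  shows "forced_mate m n (Suc (Suc j))
           \<lparr>wk = (int m - 1, int n - 2), wr = Some (int m - 1, r), bk = (int m - 1, int n)\<rparr>"
    (is "forced_mate m n _ ?P")
proof (rule forced_mate_SucI)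
  let ?W = "?P\<lparr>wr := Some (int m - 2, r)\<rparr>"
  show "?W \<in> white_moves m n ?P"
    using assms by (intro white_rook_move) (auto simp: board_defs)
  show "wr ?W = Some (int m - 2, r)" by simp
  show "\<not> king_adj (bk ?W) (int m - 2, r)" using assms by (simp add: king_adj_def)
  have flights: "black_flights m n ?W = {(int m, int n)}"
  proof (intro set_eqI iffI)
    fix k assume k: "k \<in> black_flights m n ?W"
    obtain a c where ac: "k = (a, c)" by fastforce
    have "(a = int m - 2 \<or> a = int m - 1 \<or> a = int m) \<and> (c = int n - 1 \<or> c = int n)"
      using black_flights_top_edge[of a c m n ?W "int m - 1"] k ac by auto
    then show "k \<in> {(int m, int n)}"
      using assms k ac by (elim conjE disjE) (auto simp: black_flights_def board_defs)
  qed (use assms in \<open>auto simp: black_flights_def board_defs\<close>)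
  then show "black_flights m n ?W \<noteq> {}" by simp
  fix k assume "k \<in> black_flights m n ?W"
  then show "forced_mate m n (Suc j) (?W\<lparr>bk := k\<rparr>)"
    using flights forced_mate_Suc_back_rank[OF assms] by simp
qed

lemma forced_mate_three_corridor_corner:
  assumes "3 \<le> m" "1 \<le> r" "r \<le> int n - 3"
  shows "forced_mate m n 3 (corridor m (int n - 3) (int n) r)"
proof -
  let ?W = "(corridor m (int n - 3) (int n) r)\<lparr>wk := (int m - 1, int n - 2)\<rparr>"
  have "forced_mate m n (Suc (Suc (Suc 0))) (corridor m (int n - 3) (int n) r)"
  proof (rule forced_mate_SucI)
    show "?W \<in> white_moves m n (corridor m (int n - 3) (int n) r)"
      using assms by (intro white_king_move) (auto simp: corridor_def board_defs)
    show "wr ?W = Some (int m - 1, r)" by (simp add: corridor_def)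
    show "\<not> king_adj (bk ?W) (int m - 1, r)" using assms by (simp add: corridor_def king_adj_def)
    have flights: "black_flights m n ?W = {(int m - 1, int n)}"
    proof (intro set_eqI iffI)
      fix k assume k: "k \<in> black_flights m n ?W"
      obtain a c where ac: "k = (a, c)" by fastforce
      have "(a = int m - 1 \<or> a = int m) \<and> (c = int n - 1 \<or> c = int n)"
        using black_flights_top_edge[of a c m n ?W "int m"] k ac by (auto simp: corridor_def)
      then show "k \<in> {(int m - 1, int n)}"
        using assms k ac by (elim conjE disjE) (auto simp: corridor_def black_flights_def board_defs)
    qed (use assms in \<open>auto simp: corridor_def black_flights_def board_defs\<close>)
    then show "black_flights m n ?W \<noteq> {}" by simp
    fix k assume "k \<in> black_flights m n ?W"
    then show "forced_mate m n (Suc (Suc 0)) (?W\<lparr>bk := k\<rparr>)"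
      using flights forced_mate_Suc_Suc_rook_swing[OF assms]
      by (simp add: corridor_def del: forced_mate.simps)
  qed
  then show ?thesis by (simp add: numeral_eq_Suc)
qed

lemma forced_mate_corridor_odd_gap:
  assumes "3 \<le> m" "1 \<le> r" "r \<le> y" "y + 3 \<le> b" "b \<le> int n" "odd (b - y)"
    "int n - y = int k"
  shows "forced_mate m n k (corridor m y b r)"
  using assms(3-)
proof (induction k arbitrary: y b)
  case 0
  then show ?case by simp
next
  case (Suc k)
  show ?case
  proof (cases "y = int n - 3")
    case True
    then have "b = int n" "Suc k = 3" using Suc.prems by auto
    moreover have "forced_mate m n 3 (corridor m (int n - 3) (int n) r)"
      using Suc.prems True by (intro forced_mate_three_corridor_corner[OF assms(1,2)]) simp
    ultimately show ?thesis using True by simp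
  next
    case False
    then have "y + 4 \<le> int n" using Suc.prems by presburger
    show ?thesis
    proof (rule forced_mate_Suc_corridorI[OF white_moves_corridor_king_step])
      fix c assume c: "\<bar>c - b\<bar> = 1" "y + 1 + 2 \<le> c" "c \<le> int n"
      have "c = b - 1 \<or> c = b + 1" using c(1) by (auto simp: abs_eq_iff)
      then have "odd (c - (y + 1))" using Suc.prems(4) by auto
      then have "y + 1 + 3 \<le> c" using c(2) by presburger
      with c \<open>odd (c - (y + 1))\<close> show "forced_mate m n k (corridor m (y + 1) c r)"
        using Suc.prems by (intro Suc.IH) auto
    qed (use assms Suc.prems \<open>y + 4 \<le> int n\<close> in auto)
  qed
qed

(* The condition on b = y + 2 keeps the waiting move available: the rook can shift to
   row 2 out of the Black king's reach, and the Black king then still has a square above. *)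
lemma forced_mate_corridor_even_gap:
  assumes "3 \<le> m" "1 \<le> y" "y + 2 \<le> b" "b \<le> int n" "even (b - y)"
    "b = y + 2 \<longrightarrow> 2 \<le> y \<and> b < int n" "int n - y + 1 = int k"
  shows "forced_mate m n k (corridor m y b 1)"
  using assms(2-)
proof (induction k arbitrary: y b)
  case 0
  then show ?case by simp
next
  case (Suc k)
  show ?case
  proof (cases "b = y + 2")
    case True
    show ?thesis
    proof (rule forced_mate_Suc_corridorI[OF white_moves_corridor_rook_shift[of m 2]])
      fix c assume c: "\<bar>c - b\<bar> = 1" "y + 2 \<le> c" "c \<le> int n"
      then have "c = b + 1" using True by (auto simp: abs_eq_iff)
      then show "forced_mate m n k (corridor m y c 2)"
        using Suc.prems True c by (intro forced_mate_corridor_odd_gap[OF assms(1)]) auto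
    qed (use assms Suc.prems True in auto)
  next
    case False
    then have "y + 4 \<le> b" using Suc.prems(2,4) by presburger
    show ?thesis
    proof (rule forced_mate_Suc_corridorI[OF white_moves_corridor_king_step])
      fix c assume c: "\<bar>c - b\<bar> = 1" "y + 1 + 2 \<le> c" "c \<le> int n"
      then have "c = b - 1 \<or> c = b + 1" by (auto simp: abs_eq_iff)
      then show "forced_mate m n k (corridor m (y + 1) c 1)"
        using Suc.prems c \<open>y + 4 \<le> b\<close> by (intro Suc.IH) auto
    qed (use assms Suc.prems \<open>y + 4 \<le> b\<close> in auto)
  qed
qed

theorem lemma2:
  fixes m n :: nat
  assumes "m \<ge> 4" and "n \<ge> 5" and "even n"
  shows "forced_mate m n (n + 1)
           \<lparr>wk = (int m, 1), wr = Some (1, 1), bk = (int m, int n)\<rparr>"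
proof -
  let ?start = "\<lparr>wk = (int m, 1), wr = Some (1, 1), bk = (int m, int n)\<rparr>"
  have n: "n \<ge> 6" using assms(2,3) by presburger
  have "corridor m 1 (int n) 1 = ?start\<lparr>wr := Some (int m - 1, 1)\<rparr>"
    by (simp add: corridor_def)
  also have "\<dots> \<in> white_moves m n ?start"
    using assms(1) n by (intro white_rook_move) (auto simp: board_defs)
  finally have first_move: "corridor m 1 (int n) 1 \<in> white_moves m n ?start" .
  have "forced_mate m n (Suc n) ?start"
  proof (rule forced_mate_Suc_corridorI[OF first_move])
    fix c assume "\<bar>c - int n\<bar> = 1" "1 + 2 \<le> c" "c \<le> int n"
    then have "c = int n - 1" by (auto simp: abs_eq_iff)
    then show "forced_mate m n n (corridor m 1 c 1)"
      using assms n by (intro forced_mate_corridor_even_gap) auto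
  qed (use assms(1) n in auto)
  then show ?thesis by simp
qed

end
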